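(* Let $n\geq 3$ and let $G$ be a connected graph with $|V(G)|<n$. Then $\mathrm{ldim}_f(G\square K_n)=\frac{n}{2}$.
   Context: All graphs are finite, simple and connected; $d$ is the shortest-path distance; $K_n$ is the complete graph on $n$ vertices. For an edge $uv$ of a graph $X$, $L_X(uv)=\{x\in V(X): d_X(u,x)\neq d_X(v,x)\}$. A function $f:V(X)\to[0,1]$ is a local resolving function of $X$ if $\sum_{x\in L_X(uv)}f(x)\geq 1$ for every edge $uv$; $\mathrm{ldim}_f(X)$ is the minimum of $\sum_{v}f(v)$ over all local resolving functions. The Cartesian product $G\square H$ has vertex set $V(G)\times V(H)$, with $(u_1,v_1)$ adjacent to $(u_2,v_2)$ iff ($u_1u_2\in E(G)$ and $v_1=v_2$) or ($u_1=u_2$ and $v_1v_2\in E(H)$). *)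

theory Defs
  imports Main "HOL-Library.Product_Plus" Complex_Main
begin

type_synonym 'a graph = "'a set \<times> ('a \<Rightarrow> 'a \<Rightarrow> bool)"

definition verts :: "'a graph \<Rightarrow> 'a set" where "verts X = fst X"
definition adj :: "'a graph \<Rightarrow> 'a \<Rightarrow> 'a \<Rightarrow> bool" where
  "adj X u v = (u \<in> verts X \<and> v \<in> verts X \<and> snd X u v)"

definition simple_graph :: "'a graph \<Rightarrow> bool" where
  "simple_graph X \<longleftrightarrow> finite (verts X) \<and> verts X \<noteq> {} \<and>
     (\<forall>u v. snd X u v \<longrightarrow> u \<in> verts X \<and> v \<in> verts X) \<and>
     (\<forall>u v. snd X u v \<longrightarrow> snd X v u) \<and> (\<forall>u. \<not> snd X u u)"

definition connected_graph :: "'a graph \<Rightarrow> bool" where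
  "connected_graph X \<longleftrightarrow> simple_graph X \<and>
     (\<forall>u\<in>verts X. \<forall>v\<in>verts X. (adj X)\<^sup>*\<^sup>* u v)"

definition gdist :: "'a graph \<Rightarrow> 'a \<Rightarrow> 'a \<Rightarrow> nat" where
  "gdist X u v = (LEAST k. (adj X ^^ k) u v)"

definition complete_graph :: "nat \<Rightarrow> nat graph" where
  "complete_graph n = ({0..<n}, \<lambda>x y. x \<in> {0..<n} \<and> y \<in> {0..<n} \<and> x \<noteq> y)"

definition cart_prod :: "'a graph \<Rightarrow> 'b graph \<Rightarrow> ('a \<times> 'b) graph" where
  "cart_prod G H = (verts G \<times> verts H,
     \<lambda>(u1, v1) (u2, v2). (adj G u1 u2 \<and> v1 = v2 \<and> v1 \<in> verts H) \<or>
                         (u1 = u2 \<and> u1 \<in> verts G \<and> adj H v1 v2))"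

definition resolving_set_edge :: "'a graph \<Rightarrow> 'a \<Rightarrow> 'a \<Rightarrow> 'a set" where
  "resolving_set_edge X u v = {x \<in> verts X. gdist X u x \<noteq> gdist X v x}"

definition local_resolving_function :: "'a graph \<Rightarrow> ('a \<Rightarrow> real) \<Rightarrow> bool" where
  "local_resolving_function X f \<longleftrightarrow>
     (\<forall>x\<in>verts X. 0 \<le> f x \<and> f x \<le> 1) \<and>
     (\<forall>u v. adj X u v \<longrightarrow> (\<Sum>x\<in>resolving_set_edge X u v. f x) \<ge> 1)"

definition ldim_f :: "'a graph \<Rightarrow> real" where
  "ldim_f X = Inf {(\<Sum>v\<in>verts X. f v) | f. local_resolving_function X f}"

end

theory Submission
  imports Defs
begin

text \<open>Distances in \<open>G \<box> K\<^sub>n\<close> split as \<open>d((g,i),(h,k)) = d\<^sub>G(g,h) + [i \<noteq> k]\<close>.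
  Hence the edge \<open>(g,i)(g,j)\<close> inside a \<open>K\<^sub>n\<close>-fibre is resolved exactly by the two layers
  \<open>V(G) \<times> {i,j}\<close>, while an edge \<open>(g,i)(h,i)\<close> of a \<open>G\<close>-layer is resolved by the two whole fibres
  over \<open>g\<close> and \<open>h\<close>. Writing \<open>c\<^sub>k\<close> for the weight of layer \<open>k\<close>, the fibre edges force
  \<open>c\<^sub>i + c\<^sub>j \<ge> 1\<close> for all \<open>i \<noteq> j\<close>, so the total weight is at least \<open>n/2\<close>. Conversely the constant
  weight \<open>1/(2|V(G)|)\<close> has total \<open>n/2\<close>; it satisfies the fibre edges with equality and the
  layer edges because their \<open>2n\<close> resolving vertices carry weight \<open>n/|V(G)| \<ge> 1\<close>.\<close>

lemma verts_complete_graph [simp]: "verts (complete_graph n) = {0..<n}"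
  by (simp add: verts_def complete_graph_def)

lemma adj_complete_graph [simp]: "adj (complete_graph n) i j \<longleftrightarrow> i < n \<and> j < n \<and> i \<noteq> j"
  by (auto simp: adj_def verts_def complete_graph_def)

lemma verts_cart_prod [simp]: "verts (cart_prod G H) = verts G \<times> verts H"
  by (simp add: verts_def cart_prod_def)

lemma adj_cart_prod:
  "adj (cart_prod G H) (g, i) (h, k) \<longleftrightarrow>
     (adj G g h \<and> i = k \<and> i \<in> verts H) \<or> (g = h \<and> g \<in> verts G \<and> adj H i k)"
  by (auto simp: adj_def[of "cart_prod G H"] cart_prod_def verts_def adj_def)

lemma connected_graph_card_verts_pos: "connected_graph G \<Longrightarrow> card (verts G) > 0"
  by (auto simp: connected_graph_def simple_graph_def card_gt_0_iff)

lemma adj_irrefl: "simple_graph X \<Longrightarrow> adj X u v \<Longrightarrow> u \<noteq> v"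
  by (auto simp: adj_def simple_graph_def)


lemma gdist_walk: "(adj X)\<^sup>*\<^sup>* u v \<Longrightarrow> (adj X ^^ gdist X u v) u v"
  unfolding gdist_def rtranclp_power by (rule LeastI_ex)

lemma gdist_le: "(adj X ^^ k) u v \<Longrightarrow> gdist X u v \<le> k"
  unfolding gdist_def by (rule Least_le)

lemma connected_graph_gdist_walk:
  "connected_graph G \<Longrightarrow> g \<in> verts G \<Longrightarrow> h \<in> verts G \<Longrightarrow> (adj G ^^ gdist G g h) g h"
  by (auto simp: connected_graph_def intro: gdist_walk)

lemma connected_graph_gdist_eq_0_iff:
  assumes "connected_graph G" "g \<in> verts G" "h \<in> verts G"
  shows "gdist G g h = 0 \<longleftrightarrow> g = h"
  using connected_graph_gdist_walk[OF assms] gdist_le[of 0 G g g] by auto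

lemma relpowp_adj_cart_prod_layer:
  assumes "(adj G ^^ m) g h" "k \<in> verts H"
  shows "(adj (cart_prod G H) ^^ m) (g, k) (h, k)"
  using assms(1)
proof (induction m arbitrary: h)
  case (Suc m)
  then obtain y where y: "(adj G ^^ m) g y" "adj G y h" by (blast elim: relpowp_Suc_E)
  have "adj (cart_prod G H) (y, k) (h, k)" using y(2) assms(2) by (simp add: adj_cart_prod)
  with Suc.IH[OF y(1)] show ?case by (rule relpowp_Suc_I)
qed simp

lemma relpowp_adj_cart_prod_project:
  assumes "(adj (cart_prod G H) ^^ m) x y"
  shows "\<exists>m'. (adj G ^^ m') (fst x) (fst y) \<and> m' + (if snd x = snd y then 0 else 1) \<le> m"
  using assms
proof (induction m arbitrary: y)
  case 0
  then show ?case by (auto intro: exI[of _ 0])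
next
  case (Suc m)
  then obtain z where z: "(adj (cart_prod G H) ^^ m) x z" "adj (cart_prod G H) z y"
    by (blast elim: relpowp_Suc_E)
  from Suc.IH[OF z(1)] obtain m' where m': "(adj G ^^ m') (fst x) (fst z)"
    "m' + (if snd x = snd z then 0 else 1) \<le> m" by blast
  obtain z1 z2 y1 y2 where zy: "z = (z1, z2)" "y = (y1, y2)" by fastforce
  from z(2) consider "adj G z1 y1" "z2 = y2" | "z1 = y1"
    unfolding zy adj_cart_prod by blast
  then show ?case
  proof cases
    case 1
    then have "(adj G ^^ Suc m') (fst x) (fst y)" using m'(1) zy by (auto intro: relpowp_Suc_I)
    with 1 m'(2) zy show ?thesis by (intro exI[of _ "Suc m'"]) auto
  next
    case 2
    with m' zy show ?thesis by (intro exI[of _ m']) auto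
  qed
qed

lemma gdist_cart_prod_complete_graph:
  assumes G: "connected_graph G" and gh: "g \<in> verts G" "h \<in> verts G" and ik: "i < n" "k < n"
  shows "gdist (cart_prod G (complete_graph n)) (g, i) (h, k) = gdist G g h + (if i = k then 0 else 1)"
proof -
  let ?P = "cart_prod G (complete_graph n)"
  have layer_walk: "(adj ?P ^^ gdist G g h) (g, k) (h, k)"
    by (intro relpowp_adj_cart_prod_layer connected_graph_gdist_walk G gh) (simp add: ik)
  have walk: "(adj ?P ^^ (gdist G g h + (if i = k then 0 else 1))) (g, i) (h, k)"
  proof (cases "i = k")
    case False
    then have "adj ?P (g, i) (g, k)" using gh ik by (simp add: adj_cart_prod)
    from relpowp_Suc_I2[OF this layer_walk] False show ?thesis by simp
  qed (use layer_walk in simp)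
  then obtain m' where "(adj G ^^ m') g h" "m' + (if i = k then 0 else 1) \<le> gdist ?P (g, i) (h, k)"
    using relpowp_adj_cart_prod_project[OF gdist_walk[OF relpowp_imp_rtranclp[OF walk]]] by auto
  with gdist_le[OF walk] gdist_le[of m' G g h] show ?thesis by linarith
qed


lemma resolving_set_edge_fibre:
  assumes G: "connected_graph G" and "g \<in> verts G" "i < n" "j < n" "i \<noteq> j"
  shows "resolving_set_edge (cart_prod G (complete_graph n)) (g, i) (g, j) = verts G \<times> {i, j}"
  using assms unfolding resolving_set_edge_def
  by (auto simp: gdist_cart_prod_complete_graph[OF G] split: if_splits)

lemma resolving_set_edge_layer:
  assumes G: "connected_graph G" and gh: "adj G g h" and "i < n"
  shows "{g, h} \<times> {0..<n} \<subseteq> resolving_set_edge (cart_prod G (complete_graph n)) (g, i) (h, i)"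
proof -
  have "g \<in> verts G" "h \<in> verts G" "g \<noteq> h"
    using gh adj_irrefl[of G g h] G by (auto simp: adj_def connected_graph_def)
  then have "gdist G g g = 0" "gdist G h h = 0" "gdist G g h \<noteq> 0" "gdist G h g \<noteq> 0"
    using connected_graph_gdist_eq_0_iff[OF G] by auto
  with \<open>g \<in> verts G\<close> \<open>h \<in> verts G\<close> show ?thesis
    using assms unfolding resolving_set_edge_def
    by (auto simp: gdist_cart_prod_complete_graph[OF G])
qed


lemma card_div_2_le_sum_if_pairwise_ge_1:
  fixes c :: "'a \<Rightarrow> real"
  assumes A: "finite A" "card A \<ge> 2"
    and pair: "\<And>i j. i \<in> A \<Longrightarrow> j \<in> A \<Longrightarrow> i \<noteq> j \<Longrightarrow> 1 \<le> c i + c j"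
  shows "real (card A) / 2 \<le> sum c A"
proof -
  let ?n = "real (card A)" and ?S = "sum c A"
  have row: "?n - 1 \<le> (?n - 2) * c i + ?S" if i: "i \<in> A" for i
  proof -
    have "real (card (A - {i})) \<le> (\<Sum>j\<in>A - {i}. c i + c j)"
      using sum_mono[of "A - {i}" "\<lambda>_. 1::real" "\<lambda>j. c i + c j"] pair i by auto
    also have "\<dots> = real (card (A - {i})) * c i + (?S - c i)"
      using i A by (simp add: sum.distrib sum_diff1)
    finally show ?thesis using i A by (simp add: of_nat_diff algebra_simps)
  qed
  have "(\<Sum>i\<in>A. ?n - 1) \<le> (\<Sum>i\<in>A. (?n - 2) * c i + ?S)"
    by (rule sum_mono) (rule row)
  then have "?n * (?n - 1) \<le> (?n - 2) * ?S + ?n * ?S"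
    by (simp add: sum.distrib sum_distrib_left[symmetric])
  then have "?n * (?n - 1) \<le> 2 * (?n - 1) * ?S"
    by (simp add: algebra_simps)
  moreover have "?n - 1 > 0" using A by simp
  ultimately show ?thesis
    by (metis mult.commute mult.left_commute mult_le_cancel_left_pos divide_le_eq_numeral1(1))
qed

lemma local_resolving_function_sum_ge:
  assumes G: "connected_graph G" and n: "n \<ge> 2"
    and f: "local_resolving_function (cart_prod G (complete_graph n)) f"
  shows "real n / 2 \<le> (\<Sum>v\<in>verts (cart_prod G (complete_graph n)). f v)"
proof -
  let ?P = "cart_prod G (complete_graph n)" and ?V = "verts G"
  define c where "c k = (\<Sum>g\<in>?V. f (g, k))" for k
  have "?V \<noteq> {}" using G by (auto simp: connected_graph_def simple_graph_def)
  then obtain g0 where g0: "g0 \<in> ?V" by blast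
  have sum_layers: "(\<Sum>x\<in>?V \<times> B. f x) = sum c B" for B
  proof -
    have "(\<Sum>x\<in>?V \<times> B. f x) = (\<Sum>g\<in>?V. \<Sum>k\<in>B. f (g, k))"
      by (simp add: sum.cartesian_product)
    then show ?thesis unfolding c_def by (simp add: sum.swap[of _ ?V])
  qed
  have "1 \<le> c i + c j" if "i \<in> {0..<n}" "j \<in> {0..<n}" "i \<noteq> j" for i j
  proof -
    have "adj ?P (g0, i) (g0, j)" using that g0 by (simp add: adj_cart_prod)
    with f have "1 \<le> (\<Sum>x\<in>resolving_set_edge ?P (g0, i) (g0, j). f x)"
      unfolding local_resolving_function_def by blast
    also have "\<dots> = c i + c j"
      using that resolving_set_edge_fibre[OF G g0, of i n j] sum_layers[of "{i, j}"] by simp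
    finally show ?thesis .
  qed
  then have "real n / 2 \<le> sum c {0..<n}"
    using card_div_2_le_sum_if_pairwise_ge_1[of "{0..<n}" c] n by simp
  then show ?thesis using sum_layers[of "{0..<n}"] by simp
qed

lemma local_resolving_function_const:
  assumes G: "connected_graph G" and n: "card (verts G) \<le> n"
  shows "local_resolving_function (cart_prod G (complete_graph n)) (\<lambda>_. 1 / (2 * card (verts G)))"
proof -
  let ?P = "cart_prod G (complete_graph n)" and ?V = "verts G"
  define w :: real where "w = 1 / (2 * card ?V)"
  have cV: "card ?V > 0" using connected_graph_card_verts_pos[OF G] .
  have finR: "finite (resolving_set_edge ?P u v)" for u v
    by (rule finite_subset[of _ "?V \<times> {0..<n}"])
      (auto simp: resolving_set_edge_def card_gt_0_iff[THEN iffD1, OF cV])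
  have "1 \<le> (\<Sum>x\<in>resolving_set_edge ?P u v. w)" if uv: "adj ?P u v" for u v
  proof -
    obtain g i h k where u: "u = (g, i)" and v: "v = (h, k)" by fastforce
    from uv consider "adj G g h" "i = k" "i < n" | "g = h" "g \<in> ?V" "i < n" "k < n" "i \<noteq> k"
      unfolding u v adj_cart_prod by auto
    then show ?thesis
    proof cases
      case 1
      have "card ({g, h} \<times> {0..<n}) = 2 * n"
        using adj_irrefl[OF _ \<open>adj G g h\<close>] G by (simp add: connected_graph_def card_cartesian_product)
      then have "2 * real n * w \<le> (\<Sum>x\<in>resolving_set_edge ?P u v. w)"
        using sum_mono2[OF finR resolving_set_edge_layer[OF G 1(1,3)], of "\<lambda>_. w"] cV 1 u v
        by (simp add: w_def)
      moreover have "1 \<le> 2 * real n * w" using n cV by (simp add: w_def field_simps)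
      ultimately show ?thesis by linarith
    next
      case 2
      then show ?thesis
        using resolving_set_edge_fibre[OF G, of g i n k] u v cV
        by (simp add: card_cartesian_product w_def)
    qed
  qed
  moreover have "0 \<le> w" "w \<le> 1" using cV by (simp_all add: w_def)
  ultimately show ?thesis unfolding local_resolving_function_def w_def by simp
qed

lemma ldim_f_eqI:
  assumes "local_resolving_function X f" "(\<Sum>v\<in>verts X. f v) = r"
    and "\<And>f. local_resolving_function X f \<Longrightarrow> r \<le> (\<Sum>v\<in>verts X. f v)"
  shows "ldim_f X = r"
  unfolding ldim_f_def using assms by (intro cInf_eq_minimum) auto

theorem theorem3p13:
  fixes G :: "'a graph" and n :: nat
  assumes "n \<ge> 3" and "connected_graph G" and "card (verts G) < n"
  shows "ldim_f (cart_prod G (complete_graph n)) = real n / 2"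
proof (rule ldim_f_eqI)
  let ?V = "verts G"
  show "local_resolving_function (cart_prod G (complete_graph n)) (\<lambda>_. 1 / (2 * card ?V))"
    using local_resolving_function_const[OF assms(2)] assms(3) by simp
  from connected_graph_card_verts_pos[OF assms(2)] show "(\<Sum>v\<in>verts (cart_prod G (complete_graph n)). 1 / (2 * card ?V)) = real n / 2"
    by (simp add: card_cartesian_product)
  show "real n / 2 \<le> (\<Sum>v\<in>verts (cart_prod G (complete_graph n)). f v)"
    if "local_resolving_function (cart_prod G (complete_graph n)) f" for f
    using local_resolving_function_sum_ge[OF assms(2) _ that] assms(1) by simp
qed

end
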